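(* Let $S$ be an $E$-solid locally inverse semigroup, $\rho$ an inverse semigroup congruence on $S$ whose idempotent classes are completely simple subsemigroups, $T=S/\rho$, and $\mathcal C$ the derived semigroupoid. For an arrow $a$ of $\mathcal C$ let $\widehat a$ denote the unique stable arrow $b$ with $b\le a$. Then for any arrows $a,b$ of $\mathcal C$ with $\omega(a)=\alpha(b)$: (1) $\widehat{\widehat a}=\widehat a$; (2) $\widehat{a\circ b}=\widehat a\circ\widehat b$; (3) $\widehat{(b\curlywedge a)}=(\widehat b\curlywedge\widehat a)$.
   Context: The derived semigroupoid $\mathcal C$ has object set $T$ and arrows $\mathcal C(\alpha,\beta)=\{(\alpha,s,\beta)\in T\times S\times T:\alpha\cdot s\rho=\beta,\ \beta\cdot(s\rho)^{-1}=\alpha\}$; for $a=(\alpha,s,\beta)$, $\alpha(a)=\alpha$, $\omega(a)=\beta$; composition $(\alpha,s,\beta)\circ(\beta,t,\gamma)=(\alpha,st,\gamma)$. An arrow $(\alpha,s,\beta)$ is stable if $s\rho=\alpha^{-1}\beta$. Natural partial order on $\mathcal C$: $(\alpha,s,\beta)\le(\gamma,t,\delta)$ iff $\alpha=\gamma$, $\beta=\delta$ and $s\le t$ in the natural partial order of $S$ (it is known that each arrow $a$ has a unique stable $b\le a$). Inverses of $(\alpha,s,\beta)$ are $(\beta,s^*,\alpha)$ with $s^*$ an inverse of $s$ in $S$. Each loop semigroup $\mathcal C(\gamma,\gamma)$ is locally inverse, so sandwich sets $S(e,f)=\{g\text{ idempotent}: g\circ e=g=f\circ g,\ e\circ g\circ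 f=e\circ f\}$ are singletons; for arrows $b,a$ with $\alpha(b)=\omega(a)$, $(b\curlywedge a)$ is the unique element of $S(a'\circ a,\ b\circ b')$ for any inverses $a',b'$ of $a,b$. Locally inverse: regular with every $eSe$ inverse; $E$-solid: idempotent-generated subsemigroup completely regular. *)

theory Defs
  imports Main
begin

section \<open>Semigroup notions (the semigroup S is the whole type 'a)\<close>

definition idem :: "'a::semigroup_mult \<Rightarrow> bool" where
  "idem e \<longleftrightarrow> e * e = e"

definition is_inverse :: "'a::semigroup_mult \<Rightarrow> 'a \<Rightarrow> bool" where
  "is_inverse y x \<longleftrightarrow> x * y * x = x \<and> y * x * y = y"

definition regular_sg :: "'a::semigroup_mult itself \<Rightarrow> bool" where
  "regular_sg _ \<longleftrightarrow> (\<forall>x::'a. \<exists>y. is_inverse y x)"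

definition inverse_subsg :: "'a::semigroup_mult set \<Rightarrow> bool" where
  "inverse_subsg A \<longleftrightarrow> (\<forall>x\<in>A. \<forall>y\<in>A. x * y \<in> A) \<and> (\<forall>x\<in>A. \<exists>!y. y \<in> A \<and> is_inverse y x)"

definition local_submonoid :: "'a::semigroup_mult \<Rightarrow> 'a set" where
  "local_submonoid e = {e * s * e | s. True}"

definition locally_inverse :: "'a::semigroup_mult itself \<Rightarrow> bool" where
  "locally_inverse T \<longleftrightarrow> regular_sg T \<and>
     (\<forall>e::'a. idem e \<longrightarrow> inverse_subsg (local_submonoid e))"

inductive_set idem_generated :: "'a::semigroup_mult set" where
  gen: "idem e \<Longrightarrow> e \<in> idem_generated"
| mult: "x \<in> idem_generated \<Longrightarrow> y \<in> idem_generated \<Longrightarrow> x * y \<in> idem_generated"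

text \<open>A subsemigroup is completely regular iff each element lies in a subgroup of it.\<close>
definition completely_regular_subsg :: "'a::semigroup_mult set \<Rightarrow> bool" where
  "completely_regular_subsg A \<longleftrightarrow> (\<forall>x\<in>A. \<forall>y\<in>A. x * y \<in> A) \<and>
     (\<forall>a\<in>A. \<exists>x\<in>A. a * x * a = a \<and> a * x = x * a)"

definition E_solid :: "'a::semigroup_mult itself \<Rightarrow> bool" where
  "E_solid _ \<longleftrightarrow> completely_regular_subsg (idem_generated :: 'a set)"

definition completely_simple_subsg :: "'a::semigroup_mult set \<Rightarrow> bool" where
  "completely_simple_subsg A \<longleftrightarrow> A \<noteq> {} \<and> (\<forall>x\<in>A. \<forall>y\<in>A. x * y \<in> A) \<and>
     (\<forall>I. I \<subseteq> A \<and> I \<noteq> {} \<and> (\<forall>x\<in>A. \<forall>i\<in>I. x * i \<in> I \<and> i * x \<in> I) \<longrightarrow> I = A) \<and>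
     (\<exists>e\<in>A. idem e \<and> (\<forall>f\<in>A. idem f \<and> f * e = f \<and> e * f = f \<longrightarrow> f = e))"

definition nat_le :: "'a::semigroup_mult \<Rightarrow> 'a \<Rightarrow> bool" where
  "nat_le s t \<longleftrightarrow> (\<exists>e f. idem e \<and> idem f \<and> s = e * t \<and> s = t * f)"

definition congruence :: "('a::semigroup_mult \<Rightarrow> 'a \<Rightarrow> bool) \<Rightarrow> bool" where
  "congruence \<rho> \<longleftrightarrow> equivp \<rho> \<and>
     (\<forall>x y z. \<rho> x y \<longrightarrow> \<rho> (z * x) (z * y) \<and> \<rho> (x * z) (y * z))"

definition cls :: "('a \<Rightarrow> 'a \<Rightarrow> bool) \<Rightarrow> 'a \<Rightarrow> 'a set" where
  "cls \<rho> x = {y. \<rho> x y}"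

definition quot :: "('a \<Rightarrow> 'a \<Rightarrow> bool) \<Rightarrow> 'a set set" where
  "quot \<rho> = range (cls \<rho>)"

definition tmul :: "('a::semigroup_mult \<Rightarrow> 'a \<Rightarrow> bool) \<Rightarrow> 'a set \<Rightarrow> 'a set \<Rightarrow> 'a set" where
  "tmul \<rho> A B = {z. \<exists>x\<in>A. \<exists>y\<in>B. \<rho> (x * y) z}"

definition tinverse :: "('a::semigroup_mult \<Rightarrow> 'a \<Rightarrow> bool) \<Rightarrow> 'a set \<Rightarrow> 'a set \<Rightarrow> bool" where
  "tinverse \<rho> B A \<longleftrightarrow> tmul \<rho> (tmul \<rho> A B) A = A \<and> tmul \<rho> (tmul \<rho> B A) B = B"

definition inverse_congruence :: "('a::semigroup_mult \<Rightarrow> 'a \<Rightarrow> bool) \<Rightarrow> bool" where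
  "inverse_congruence \<rho> \<longleftrightarrow> congruence \<rho> \<and>
     (\<forall>A\<in>quot \<rho>. \<exists>!B. B \<in> quot \<rho> \<and> tinverse \<rho> B A)"

definition tinv :: "('a::semigroup_mult \<Rightarrow> 'a \<Rightarrow> bool) \<Rightarrow> 'a set \<Rightarrow> 'a set" where
  "tinv \<rho> A = (THE B. B \<in> quot \<rho> \<and> tinverse \<rho> B A)"

type_synonym 'a arrow = "'a set \<times> 'a \<times> 'a set"

definition dom_a :: "'a arrow \<Rightarrow> 'a set" where "dom_a a = fst a"
definition cod_a :: "'a arrow \<Rightarrow> 'a set" where "cod_a a = snd (snd a)"
definition lbl :: "'a arrow \<Rightarrow> 'a" where "lbl a = fst (snd a)"

definition is_arrow :: "('a::semigroup_mult \<Rightarrow> 'a \<Rightarrow> bool) \<Rightarrow> 'a arrow \<Rightarrow> bool" where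
  "is_arrow \<rho> a \<longleftrightarrow> (case a of (\<alpha>, s, \<beta>) \<Rightarrow>
     \<alpha> \<in> quot \<rho> \<and> \<beta> \<in> quot \<rho> \<and> tmul \<rho> \<alpha> (cls \<rho> s) = \<beta> \<and>
     tmul \<rho> \<beta> (tinv \<rho> (cls \<rho> s)) = \<alpha>)"

definition comp_a :: "'a::semigroup_mult arrow \<Rightarrow> 'a arrow \<Rightarrow> 'a arrow" where
  "comp_a a b = (dom_a a, lbl a * lbl b, cod_a b)"

definition stable :: "('a::semigroup_mult \<Rightarrow> 'a \<Rightarrow> bool) \<Rightarrow> 'a arrow \<Rightarrow> bool" where
  "stable \<rho> a \<longleftrightarrow> cls \<rho> (lbl a) = tmul \<rho> (tinv \<rho> (dom_a a)) (cod_a a)"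

definition arrow_le :: "'a::semigroup_mult arrow \<Rightarrow> 'a arrow \<Rightarrow> bool" where
  "arrow_le a b \<longleftrightarrow> dom_a a = dom_a b \<and> cod_a a = cod_a b \<and> nat_le (lbl a) (lbl b)"

definition hat :: "('a::semigroup_mult \<Rightarrow> 'a \<Rightarrow> bool) \<Rightarrow> 'a arrow \<Rightarrow> 'a arrow" where
  "hat \<rho> a = (THE b. is_arrow \<rho> b \<and> stable \<rho> b \<and> arrow_le b a)"

definition arrow_inverse :: "('a::semigroup_mult \<Rightarrow> 'a \<Rightarrow> bool) \<Rightarrow> 'a arrow \<Rightarrow> 'a arrow \<Rightarrow> bool" where
  "arrow_inverse \<rho> a' a \<longleftrightarrow> is_arrow \<rho> a' \<and> dom_a a' = cod_a a \<and> cod_a a' = dom_a a \<and>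
     is_inverse (lbl a') (lbl a)"

definition arrow_inv :: "('a::semigroup_mult \<Rightarrow> 'a \<Rightarrow> bool) \<Rightarrow> 'a arrow \<Rightarrow> 'a arrow" where
  "arrow_inv \<rho> a = (SOME a'. arrow_inverse \<rho> a' a)"

definition loop_idem :: "('a::semigroup_mult \<Rightarrow> 'a \<Rightarrow> bool) \<Rightarrow> 'a set \<Rightarrow> 'a arrow \<Rightarrow> bool" where
  "loop_idem \<rho> \<gamma> g \<longleftrightarrow> is_arrow \<rho> g \<and> dom_a g = \<gamma> \<and> cod_a g = \<gamma> \<and> comp_a g g = g"

definition sandwich :: "('a::semigroup_mult \<Rightarrow> 'a \<Rightarrow> bool) \<Rightarrow> 'a set \<Rightarrow> 'a arrow \<Rightarrow> 'a arrow \<Rightarrow> 'a arrow set" where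
  "sandwich \<rho> \<gamma> e f = {g. loop_idem \<rho> \<gamma> g \<and> comp_a g e = g \<and> comp_a f g = g \<and>
      comp_a (comp_a e g) f = comp_a e f}"

definition wedge :: "('a::semigroup_mult \<Rightarrow> 'a \<Rightarrow> bool) \<Rightarrow> 'a arrow \<Rightarrow> 'a arrow \<Rightarrow> 'a arrow" where
  "wedge \<rho> b a = (THE g. g \<in> sandwich \<rho> (cod_a a)
      (comp_a (arrow_inv \<rho> a) a) (comp_a b (arrow_inv \<rho> b)))"

end

theory Submission
  imports Defs
begin

text \<open>For an arrow \<open>(\<alpha>, s, \<beta>)\<close> let \<open>u = s s'\<close>. Choosing an idempotent \<open>e\<close> of \<open>uSu\<close> in the
  \<open>\<rho>\<close>-class \<open>\<alpha>\<inverse>\<alpha>[u]\<close> gives the stable arrow \<open>(\<alpha>, e s, \<beta>)\<close> below it. It is the only one: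
  if \<open>t\<^sub>1, t\<^sub>2 \<le> s\<close> are \<open>\<rho>\<close>-related, then \<open>t\<^sub>1 s'\<close> and \<open>t\<^sub>2 s'\<close> are commuting idempotents of
  \<open>uSu\<close> lying in one completely simple idempotent class, where all idempotents are primitive,
  so they coincide. Now (1) is immediate, (2) holds because in a locally inverse semigroup the
  natural order is compatible with multiplication and stability is preserved by composition,
  and for (3) the sandwich element of the hatted arrows is an idempotent below that of the
  original ones whose class is \<open>\<beta>\<inverse>\<beta>\<close>, as it is sandwiched between two idempotents of that
  class in the inverse semigroup \<open>T\<close>.\<close>

section \<open>Inverse semigroups\<close>

locale inverse_semigroup_on =
  fixes C :: "'b set" and m :: "'b \<Rightarrow> 'b \<Rightarrow> 'b"
  assumes closed [simp]: "x \<in> C \<Longrightarrow> y \<in> C \<Longrightarrow> m x y \<in> C"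
    and assoc [simp]: "x \<in> C \<Longrightarrow> y \<in> C \<Longrightarrow> z \<in> C \<Longrightarrow> m (m x y) z = m x (m y z)"
    and unique_inverse: "x \<in> C \<Longrightarrow> \<exists>!y. y \<in> C \<and> m (m x y) x = x \<and> m (m y x) y = y"
begin

lemma inverse_unique:
  "\<lbrakk>x \<in> C; y \<in> C; z \<in> C; m x (m y x) = x; m y (m x y) = y; m x (m z x) = x; m z (m x z) = z\<rbrakk>
    \<Longrightarrow> y = z"
  using unique_inverse[of x] by (metis assoc)

text \<open>If \<open>u\<close> is the inverse of \<open>x y\<close>, then \<open>y u x\<close> is an inverse of \<open>x y\<close> as well, so
  \<open>u = y u x\<close>; this makes \<open>u\<close> idempotent, whence \<open>x y = u\<close>.\<close>
lemma idem_mult: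
  assumes x: "x \<in> C" and y: "y \<in> C" and xx: "m x x = x" and yy: "m y y = y"
  shows "m (m x y) (m x y) = m x y"
proof -
  have xx': "m x (m x w) = m x w" if "w \<in> C" for w using that xx x by (metis assoc)
  have yy': "m y (m y w) = m y w" if "w \<in> C" for w using that yy y by (metis assoc)
  have xy: "m x y \<in> C" using x y by simp
  obtain u where u: "u \<in> C" and u1: "m (m (m x y) u) (m x y) = m x y" and u2: "m (m u (m x y)) u = u"
    using unique_inverse[OF xy] by blast
  have u1': "m x (m y (m u (m x y))) = m x y" using u1 x y u by simp
  have u2': "m u (m x (m y u)) = u" using u2 x y u by simp
  have yux: "m y (m u x) \<in> C" using x y u by simp
  have yux1: "m (m x y) (m (m y (m u x)) (m x y)) = m x y"
  proof -
    have "m (m x y) (m (m y (m u x)) (m x y)) = m x (m y (m y (m u (m x (m x y)))))"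
      using x y u by simp
    also have "\<dots> = m x (m y (m u (m x y)))" using x y u by (simp add: xx' yy')
    finally show ?thesis using u1' by simp
  qed
  have yux2: "m (m y (m u x)) (m (m x y) (m y (m u x))) = m y (m u x)"
  proof -
    have "m (m y (m u x)) (m (m x y) (m y (m u x))) = m y (m u (m x (m x (m y (m y (m u x))))))"
      using x y u by simp
    also have "\<dots> = m y (m u (m x (m y (m u x))))" using x y u by (simp add: xx' yy')
    also have "\<dots> = m y (m (m u (m x (m y u))) x)" using x y u by simp
    finally show ?thesis using u2' by simp
  qed
  have uyux: "m y (m u x) = u" using inverse_unique[OF xy yux u yux1 yux2] u1 u2 x y u by simp
  have uu: "m u u = u"
  proof -
    have "m u u = m (m y (m u x)) (m y (m u x))" using uyux by simp
    also have "\<dots> = m y (m (m u (m x (m y u))) x)" using x y u by simp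
    also have "\<dots> = u" using u2' uyux by simp
    finally show ?thesis .
  qed
  have uu': "m u (m u w) = m u w" if "w \<in> C" for w using that uu u by (metis assoc)
  have "m x y = u"
    by (rule inverse_unique[OF u xy u]) (use u1 u2 uu x y u in \<open>simp_all add: uu'\<close>)
  then show ?thesis using uu by simp
qed

text \<open>Both \<open>e f\<close> and \<open>f e\<close> are inverses of the idempotent \<open>e f\<close>.\<close>
lemma idem_commute:
  assumes e: "e \<in> C" and f: "f \<in> C" and ee: "m e e = e" and ff: "m f f = f"
  shows "m e f = m f e"
proof -
  have ee': "m e (m e x) = m e x" if "x \<in> C" for x using that ee e by (metis assoc)
  have ff': "m f (m f x) = m f x" if "x \<in> C" for x using that ff f by (metis assoc)
  have ef: "m (m e f) (m e f) = m e f" and fe: "m (m f e) (m f e) = m f e"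
    using idem_mult e f ee ff by blast+
  have ef': "m e (m f (m e (m f w))) = m e (m f w)" if "w \<in> C" for w
    using that ef e f by (metis assoc closed)
  have fe': "m f (m e (m f (m e w))) = m f (m e w)" if "w \<in> C" for w
    using that fe e f by (metis assoc closed)
  have "m (m e f) (m (m e f) (m e f)) = m e f" "m (m e f) (m (m f e) (m e f)) = m e f"
    "m (m f e) (m (m e f) (m f e)) = m f e"
    using e f ef fe by (simp_all add: ee' ff' ef' fe')
  then show ?thesis using inverse_unique[of "m e f" "m e f" "m f e"] e f ef by simp
qed

definition inv :: "'b \<Rightarrow> 'b" where
  "inv x = (THE y. y \<in> C \<and> m (m x y) x = x \<and> m (m y x) y = y)"

lemma inv_props:
  assumes "x \<in> C"
  shows "inv x \<in> C" "m x (m (inv x) x) = x" "m (inv x) (m x (inv x)) = inv x"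
proof -
  have "inv x \<in> C \<and> m (m x (inv x)) x = x \<and> m (m (inv x) x) (inv x) = inv x"
    unfolding inv_def by (rule theI'[OF unique_inverse[OF assms]])
  then show "inv x \<in> C" "m x (m (inv x) x) = x" "m (inv x) (m x (inv x)) = inv x"
    using assms by auto
qed

lemma inv_closed [simp]: "x \<in> C \<Longrightarrow> inv x \<in> C"
  and inv_l [simp]: "x \<in> C \<Longrightarrow> m x (m (inv x) x) = x"
  and inv_r [simp]: "x \<in> C \<Longrightarrow> m (inv x) (m x (inv x)) = inv x"
  using inv_props by blast+

lemma inv_l' [simp]: "x \<in> C \<Longrightarrow> w \<in> C \<Longrightarrow> m x (m (inv x) (m x w)) = m x w"
proof -
  assume "x \<in> C" "w \<in> C"
  then have "m x (m (inv x) (m x w)) = m (m x (m (inv x) x)) w" by (simp del: inv_l)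
  with \<open>x \<in> C\<close> show ?thesis by simp
qed

lemma inv_r' [simp]: "x \<in> C \<Longrightarrow> w \<in> C \<Longrightarrow> m (inv x) (m x (m (inv x) w)) = m (inv x) w"
proof -
  assume "x \<in> C" "w \<in> C"
  then have "m (inv x) (m x (m (inv x) w)) = m (m (inv x) (m x (inv x))) w" by (simp del: inv_r)
  with \<open>x \<in> C\<close> show ?thesis by simp
qed

lemma inv_eq: "\<lbrakk>x \<in> C; y \<in> C; m x (m y x) = x; m y (m x y) = y\<rbrakk> \<Longrightarrow> inv x = y"
  using inverse_unique[of x "inv x" y] by auto

lemma inv_inv [simp]: "x \<in> C \<Longrightarrow> inv (inv x) = x"
  by (rule inv_eq) auto

lemma inv_idem: "e \<in> C \<Longrightarrow> m e e = e \<Longrightarrow> inv e = e"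
  by (rule inv_eq) auto

lemma inv_mult:
  assumes x: "x \<in> C" and y: "y \<in> C"
  shows "inv (m x y) = m (inv y) (inv x)"
proof (rule inv_eq)
  have c: "m (m (inv x) x) (m y (inv y)) = m (m y (inv y)) (m (inv x) x)"
    by (intro idem_commute) (use x y in simp_all)
  have c': "m (inv x) (m x (m y (m (inv y) w))) = m y (m (inv y) (m (inv x) (m x w)))"     if "w \<in> C" for w
  proof -
    have "m (inv x) (m x (m y (m (inv y) w))) = m (m (m (inv x) x) (m y (inv y))) w" using that x y by simp
    also have "\<dots> = m (m (m y (inv y)) (m (inv x) x)) w" by (simp only: c)
    also have "\<dots> = m y (m (inv y) (m (inv x) (m x w)))" using that x y by simp
    finally show ?thesis .
  qed
  show "m (m x y) (m (m (inv y) (inv x)) (m x y)) = m x y"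
    using x y c'[symmetric] by simp
  show "m (m (inv y) (inv x)) (m (m x y) (m (inv y) (inv x))) = m (inv y) (inv x)"
    using x y c' by simp
qed (use x y in auto)

lemma sandwich_eq_mult:
  assumes C: "e \<in> C" "f \<in> C" "h \<in> C"
    and idem: "m e e = e" "m f f = f" "m h h = h"
    and sandwich: "m h e = h" "m f h = h" "m (m e h) f = m e f"
  shows "h = m e f"
proof -
  have "m e h = h" using C idem sandwich(1) idem_commute[of e h] by simp
  moreover have "m h f = h" using C idem sandwich(2) idem_commute[of h f] by simp
  ultimately show ?thesis using sandwich(3) by simp
qed

end

section \<open>Locally inverse semigroups\<close>

lemma locally_inverse_regular: "locally_inverse TYPE('a::semigroup_mult) \<Longrightarrow> regular_sg TYPE('a)"
  unfolding locally_inverse_def by simp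

definition some_inv :: "'a::semigroup_mult \<Rightarrow> 'a" where
  "some_inv x = (SOME y. is_inverse y x)"

lemma some_inv:
  assumes "regular_sg TYPE('a::semigroup_mult)"
  shows "(x::'a) * some_inv x * x = x" "some_inv x * x * some_inv x = some_inv x"
proof -
  have "is_inverse (some_inv x) x"
    unfolding some_inv_def using assms unfolding regular_sg_def by (metis someI_ex)
  then show "x * some_inv x * x = x" "some_inv x * x * some_inv x = some_inv x"
    unfolding is_inverse_def by auto
qed

lemma inverse_semigroup_on_local_submonoid:
  assumes "locally_inverse TYPE('a::semigroup_mult)" and "idem (u::'a)"
  shows "inverse_semigroup_on (local_submonoid u) (*)"
proof -
  have "inverse_subsg (local_submonoid u)" using assms unfolding locally_inverse_def by blast
  then show ?thesis
    by unfold_locales (auto simp: inverse_subsg_def is_inverse_def mult.assoc)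
qed

lemma mem_local_submonoid: "idem u \<Longrightarrow> u * x = x \<Longrightarrow> x * u = x \<Longrightarrow> x \<in> local_submonoid u"
  unfolding local_submonoid_def by (rule CollectI, rule exI[of _ x]) (simp add: mult.assoc)

lemma local_idem_commute:
  assumes "locally_inverse TYPE('a::semigroup_mult)" and u: "idem (u::'a)"
    and "u * x = x" "x * u = x" "u * y = y" "y * u = y" "idem x" "idem y"
  shows "x * y = y * x"
proof -
  interpret inverse_semigroup_on "local_submonoid u" "(*)"
    using inverse_semigroup_on_local_submonoid assms(1) u .
  show ?thesis using assms mem_local_submonoid[OF u] idem_commute unfolding idem_def by metis
qed

text \<open>An idempotent \<open>e\<close> of \<open>uSu\<close> times an idempotent \<open>r\<close> of \<open>uS\<close> is idempotent: replacing
  \<open>r\<close> by \<open>r u\<close> brings it into \<open>uSu\<close>, where it commutes with \<open>e\<close>.\<close>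
lemma local_idem_mult_right:
  assumes LI: "locally_inverse TYPE('a::semigroup_mult)"
    and u: "idem (u::'a)" and e: "idem e" "u * e = e" "e * u = e" and r: "idem r" "u * r = r"
  shows "idem (e * r)" "r * (e * r) = e * r"
proof -
  have uu: "u * u = u" and ee: "e * e = e" and rr: "r * r = r" using u e r by (simp_all add: idem_def)
  have r': "idem (r * u)" "u * (r * u) = r * u" "r * u * u = r * u"
    using uu rr r(2) unfolding idem_def by (metis mult.assoc)+
  have comm: "e * (r * u) = r * u * e"
    by (rule local_idem_commute[OF LI u]) (use e r' in simp_all)
  have re: "r * e = r * u * e" using e(2) by (simp add: mult.assoc)
  have rur: "r * u * r = r" using r(2) rr by (metis mult.assoc)
  show "r * (e * r) = e * r"
    using re comm rur by (metis mult.assoc)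
  then show "idem (e * r)"
    unfolding idem_def using ee by (metis mult.assoc)
qed

lemma local_idem_mult_left:
  assumes LI: "locally_inverse TYPE('a::semigroup_mult)"
    and u: "idem (u::'a)" and e: "idem e" "u * e = e" "e * u = e" and l: "idem l" "l * u = l"
  shows "idem (l * e)" "l * e * l = l * e"
proof -
  have uu: "u * u = u" and ee: "e * e = e" and ll: "l * l = l" using u e l by (simp_all add: idem_def)
  have l': "idem (u * l)" "u * (u * l) = u * l" "u * l * u = u * l"
    using uu ll l(2) unfolding idem_def by (metis mult.assoc)+
  have comm: "e * (u * l) = u * l * e"
    by (rule local_idem_commute[OF LI u]) (use e l' in simp_all)
  have el: "e * l = e * (u * l)" using e(3) by (metis mult.assoc)
  have lul: "l * (u * l) = l" using l(2) ll by (metis mult.assoc)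
  show "l * e * l = l * e"
    using el comm lul by (metis mult.assoc)
  then show "idem (l * e)"
    unfolding idem_def using ee by (metis mult.assoc)
qed

definition sg_sandwich :: "'a::semigroup_mult \<Rightarrow> 'a \<Rightarrow> 'a set" where
  "sg_sandwich e f = {h. h * h = h \<and> h * e = h \<and> f * h = h \<and> e * h * f = e * f}"

text \<open>An idempotent \<open>k\<close> with \<open>k e = k = f k\<close> lies below the sandwich element \<open>h\<close> of \<open>e\<close> and
  \<open>f\<close>: \<open>k = k (e h f) k\<close>, and commuting \<open>e h\<close> with \<open>e k\<close> in \<open>eSe\<close> (and \<open>h f\<close> with \<open>k f\<close>
  in \<open>fSf\<close>) absorbs \<open>h\<close> into \<open>k\<close>.\<close>
lemma below_sandwich:
  assumes LI: "locally_inverse TYPE('a::semigroup_mult)"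
    and ie: "idem (e::'a)" and iF: "idem f" and h: "h \<in> sg_sandwich e f"
    and ik: "idem k" and ke: "k * e = k" and fk: "f * k = k"
  shows "k * h = k" "h * k = k"
proof -
  have hh: "h * h = h" and he: "h * e = h" and fh: "f * h = h" and ehf: "e * h * f = e * f"
    using h by (auto simp: sg_sandwich_def)
  have ee: "e * e = e" and ff: "f * f = f" and kk: "k * k = k"
    using ie iF ik by (auto simp: idem_def)
  have c1: "(e * h) * (e * k) = (e * k) * (e * h)"
    by (rule local_idem_commute[OF LI ie]) (use ee hh kk he ke in \<open>(metis idem_def mult.assoc)+\<close>)
  have c2: "(h * f) * (k * f) = (k * f) * (h * f)"
    by (rule local_idem_commute[OF LI iF]) (use ff hh kk fh fk in \<open>(metis idem_def mult.assoc)+\<close>)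
  have khk: "k * h * k = k"
  proof -
    have "k = k * e * (f * k)" using kk ke fk by simp
    also have "\<dots> = k * (e * h * f) * k" using ehf by (simp add: mult.assoc)
    also have "\<dots> = (k * e) * h * (f * k)" by (simp add: mult.assoc)
    finally show ?thesis using ke fk by simp
  qed
  have "(k * e) * (h * e) * k = (k * e) * (k * e) * h"
    using arg_cong[OF c1, of "\<lambda>x. k * x"] by (simp add: mult.assoc)
  then show "k * h = k" using ke he kk khk by (simp add: mult.assoc)
  have "h * (f * k) * (f * k) = k * (f * h) * (f * k)"
    using arg_cong[OF c2, of "\<lambda>x. x * k"] by (simp add: mult.assoc)
  then show "h * k = k" using fk fh kk khk by (simp add: mult.assoc)
qed

lemma sg_sandwich_unique:
  assumes "locally_inverse TYPE('a::semigroup_mult)" and "idem (e::'a)" "idem f"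
    and "h \<in> sg_sandwich e f" "k \<in> sg_sandwich e f"
  shows "h = k"
proof -
  have "idem h" "h * e = h" "f * h = h" "idem k" "k * e = k" "f * k = k"
    using assms(4,5) by (auto simp: sg_sandwich_def idem_def)
  then have "k * h = k" "k * h = h"
    using below_sandwich[OF assms(1-3)] assms(4,5) by metis+
  then show ?thesis by simp
qed

lemma sg_sandwich_exists:
  assumes "regular_sg TYPE('a::semigroup_mult)" and "idem (e::'a)" "idem f"
  shows "f * some_inv (e * f) * e \<in> sg_sandwich e f"
proof -
  let ?y = "some_inv (e * f)"
  have ee: "e * e = e" and ff: "f * f = f" using assms(2,3) by (auto simp: idem_def)
  have "?y * (e * f) * ?y = ?y" "(e * f) * ?y * (e * f) = e * f"
    using some_inv[OF assms(1)] by simp_all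
  then show ?thesis
    unfolding sg_sandwich_def using ee ff by (simp add: mult.assoc) (metis mult.assoc)
qed

section \<open>The natural partial order\<close>

text \<open>Mitsch's description of the natural partial order of a regular semigroup.\<close>
lemma nat_leI:
  assumes R: "regular_sg TYPE('a::semigroup_mult)"
    and "(x::'a) = u * z" "x = z * v" "u * x = x"
  shows "nat_le x z"
proof -
  let ?x = "some_inv x"
  have xx: "x * ?x * x = x" using some_inv[OF R] by simp
  have xv: "x * v = x" using assms(2-4) by (simp add: mult.assoc)
  let ?e = "x * ?x * u" and ?f = "v * ?x * x"
  have "?e * z = x" using assms(2) xx by (simp add: mult.assoc)
  moreover have "z * ?f = x" using assms(3) xx by (simp add: mult.assoc[symmetric])
  moreover have "?e * ?e = ?e" using assms(4) xx by (metis mult.assoc)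
  moreover have "?f * ?f = ?f" using xv xx by (metis mult.assoc)
  ultimately show ?thesis unfolding nat_le_def idem_def by metis
qed

lemma nat_leE:
  assumes "nat_le x z"
  obtains u v where "x = u * z" "x = z * v" "u * x = x"
  using assms unfolding nat_le_def idem_def by (metis mult.assoc)

lemma nat_le_refl: "regular_sg TYPE('a::semigroup_mult) \<Longrightarrow> nat_le (x::'a) x"
  using nat_leI[of x "x * some_inv x" x "some_inv x * x"] some_inv[of x] by (simp add: mult.assoc)

lemma nat_le_trans:
  assumes R: "regular_sg TYPE('a::semigroup_mult)" and "nat_le (x::'a) y" "nat_le y z"
  shows "nat_le x z"
proof -
  obtain u v where 1: "x = u * y" "x = y * v" "u * x = x" using nat_leE assms(2) by blast
  obtain u' v' where 2: "y = u' * z" "y = z * v'" "u' * y = y" using nat_leE assms(3) by blast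
  show ?thesis
  proof (rule nat_leI[OF R, of x "u * u'" z "v' * v"])
    show "x = u * u' * z" using 1 2 by (simp add: mult.assoc)
    show "x = z * (v' * v)" using 1 2 by (simp add: mult.assoc[symmetric])
    show "u * u' * x = x" using 1 2 by (metis mult.assoc)
  qed
qed

lemma nat_le_absorb:
  assumes "nat_le t s" and "s * s' * s = (s::'a::semigroup_mult)"
  shows "s * s' * t = t" "t * s' * s = t" "t * s' * t = t"
proof -
  obtain e f where e: "t = e * s" and f: "f * f = f" "t = s * f"
    using assms(1) unfolding nat_le_def idem_def by blast
  show "s * s' * t = t" using f(2) assms(2) by (metis mult.assoc)
  show "t * s' * s = t" using e assms(2) by (metis mult.assoc)
  then show "t * s' * t = t" using f by (metis mult.assoc)
qed

lemma nat_le_mult_right: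
  assumes LI: "locally_inverse TYPE('a::semigroup_mult)" and le: "nat_le (x::'a) y"
  shows "nat_le (x * z) (y * z)"
proof -
  have R: "regular_sg TYPE('a)" using locally_inverse_regular[OF LI] .
  let ?y = "some_inv y" and ?w = "some_inv (y * z)"
  have yy: "y * ?y * y = y" and ww: "y * z * ?w * y * z = y * z"
    using some_inv[OF R, of y] some_inv[OF R, of "y * z"] by (simp_all add: mult.assoc)
  have x: "y * ?y * x = x" "x * ?y * y = x" "x * ?y * x = x" using nat_le_absorb[OF le yy] by auto
  define u e r where "u = y * ?y" and "e = x * ?y" and "r = y * z * ?w"
  have "idem u" "idem e" "u * e = e" "e * u = e" "idem r" "u * r = r"
    unfolding u_def e_def r_def idem_def using x yy ww by (simp_all add: mult.assoc[symmetric])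
  then have E: "idem (e * r)" "r * (e * r) = e * r"
    using local_idem_mult_right[OF LI] by blast+
  have r: "r * (y * z) = y * z" unfolding r_def using ww by (simp add: mult.assoc[symmetric])
  have Ew: "e * r * (y * z) = x * z"
    using r x(2) unfolding e_def by (simp add: mult.assoc) (simp add: mult.assoc[symmetric])
  show ?thesis
  proof (rule nat_leI[OF R, of "x * z" "e * r" "y * z" "?w * (e * r) * (y * z)"])
    show "x * z = e * r * (y * z)" using Ew by simp
    have "y * z * (?w * (e * r) * (y * z)) = r * (e * r) * (y * z)"
      unfolding r_def by (simp add: mult.assoc)
    then show "x * z = y * z * (?w * (e * r) * (y * z))" using E(2) Ew by simp
    have "e * r * (x * z) = (e * r) * (e * r) * (y * z)" using Ew by (simp add: mult.assoc)
    then show "e * r * (x * z) = x * z" using E(1) Ew unfolding idem_def by simp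
  qed
qed

lemma nat_le_mult_left:
  assumes LI: "locally_inverse TYPE('a::semigroup_mult)" and le: "nat_le (x::'a) y"
  shows "nat_le (z * x) (z * y)"
proof -
  have R: "regular_sg TYPE('a)" using locally_inverse_regular[OF LI] .
  let ?y = "some_inv y" and ?w = "some_inv (z * y)"
  have yy: "y * (?y * y) = y" and ww: "z * (y * (?w * (z * y))) = z * y"
    using some_inv[OF R, of y] some_inv[OF R, of "z * y"] by (simp_all add: mult.assoc)
  have x: "y * (?y * x) = x" "x * (?y * y) = x" "x * (?y * x) = x"
    using nat_le_absorb[OF le, of ?y] yy by (simp_all add: mult.assoc)
  define u e l where "u = ?y * y" and "e = ?y * x" and "l = ?w * (z * y)"
  have "idem u" "idem e" "u * e = e" "e * u = e" "idem l" "l * u = l"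
    unfolding u_def e_def l_def idem_def using x yy ww by (simp_all add: mult.assoc)
  then have F: "idem (l * e)" "l * e * l = l * e"
    using local_idem_mult_left[OF LI] by blast+
  have l: "z * y * l = z * y" unfolding l_def using ww by (simp add: mult.assoc)
  have wF: "z * y * (l * e) = z * x"
    using l x(1) unfolding e_def by (simp add: mult.assoc[symmetric]) (simp add: mult.assoc)
  show ?thesis
  proof (rule nat_leI[OF R, of "z * x" "z * y * (l * e) * ?w" "z * y" "l * e"])
    have "z * y * (l * e) * ?w * (z * y) = z * y * (l * e * l)"
      unfolding l_def by (simp add: mult.assoc)
    then show "z * x = z * y * (l * e) * ?w * (z * y)" using F(2) wF by simp
    show "z * x = z * y * (l * e)" using wF by simp
    have "z * y * (l * e) * ?w * (z * x) = z * y * (l * e * l) * (l * e)"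
      using wF[symmetric] unfolding l_def by (simp add: mult.assoc)
    also have "\<dots> = z * y * (l * e)" using F unfolding idem_def by (metis mult.assoc)
    finally show "z * y * (l * e) * ?w * (z * x) = z * x" using wF by simp
  qed
qed

lemma nat_le_idem_factor:
  assumes "nat_le t s" and "s * s' * s = (s::'a::semigroup_mult)"
  shows "idem (t * s')" "s * s' * (t * s') = t * s'" "t * s' * (s * s') = t * s'" "t * s' * s = t"
  using nat_le_absorb[OF assms] by (simp_all add: idem_def mult.assoc[symmetric])

lemma nat_le_idemI: "idem k \<Longrightarrow> k * h = k \<Longrightarrow> h * k = k \<Longrightarrow> nat_le k h"
  unfolding nat_le_def by metis

lemma inverse_idems: "is_inverse s' (s::'a::semigroup_mult) \<Longrightarrow> idem (s' * s) \<and> idem (s * s')"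
  unfolding is_inverse_def idem_def by (simp add: mult.assoc[symmetric])

lemma sg_sandwich_mono:
  assumes LI: "locally_inverse TYPE('a::semigroup_mult)"
    and "nat_le s0 s" "nat_le t0 t"
    and s: "is_inverse s' s" and t: "is_inverse t' t" and "is_inverse s0' s0" "is_inverse t0' (t0::'a)"
    and h: "h \<in> sg_sandwich (s' * s) (t * t')" and k: "k \<in> sg_sandwich (s0' * s0) (t0 * t0')"
  shows "nat_le k h"
proof -
  have s0: "s0 * s' * s = s0" and t0: "t * t' * t0 = t0"
    using nat_le_absorb assms(2,3) s t unfolding is_inverse_def by blast+
  have k0: "k * s0' * s0 = k" "t0 * t0' * k = k" and "idem k"
    using k by (simp_all add: sg_sandwich_def idem_def mult.assoc)
  have "k * (s' * s) = k * s0' * (s0 * s' * s)" using k0(1) by (simp add: mult.assoc[symmetric])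
  then have ke: "k * (s' * s) = k" by (simp only: s0 k0(1))
  have "t * t' * k = (t * t' * t0) * t0' * k" using k0(2) by (simp add: mult.assoc)
  then have fk: "t * t' * k = k" by (simp only: t0 k0(2))
  have "idem (s' * s)" "idem (t * t')" using inverse_idems s t by blast+
  then have "k * h = k" "h * k = k"
    using below_sandwich[OF LI _ _ h \<open>idem k\<close> ke fk] by blast+
  then show ?thesis using nat_le_idemI \<open>idem k\<close> by blast
qed

section \<open>Completely simple semigroups\<close>

lemma completely_simple_factor:
  assumes cs: "completely_simple_subsg A" and "e \<in> A" "f \<in> A"
  obtains x y where "x \<in> A" "y \<in> A" "f = x * e * y"
proof -
  have cl: "\<And>x y. x \<in> A \<Longrightarrow> y \<in> A \<Longrightarrow> x * y \<in> A"
    using cs unfolding completely_simple_subsg_def by blast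
  let ?I = "{x * e * y | x y. x \<in> A \<and> y \<in> A}"
  have ideal: "\<forall>x\<in>A. \<forall>i\<in>?I. x * i \<in> ?I \<and> i * x \<in> ?I"
  proof (intro ballI)
    fix x i assume "x \<in> A" "i \<in> ?I"
    then obtain p q where "i = p * e * q" "p \<in> A" "q \<in> A" "x \<in> A" by blast
    then have "x * i = (x * p) * e * q" "i * x = p * e * (q * x)" "x * p \<in> A" "q * x \<in> A"
      using cl by (simp_all add: mult.assoc)
    then show "x * i \<in> ?I \<and> i * x \<in> ?I" using \<open>p \<in> A\<close> \<open>q \<in> A\<close> by blast
  qed
  have "?I \<subseteq> A" using cl \<open>e \<in> A\<close> by auto
  moreover have "?I \<noteq> {}" using \<open>e \<in> A\<close> by blast
  moreover have "\<forall>I. I \<subseteq> A \<and> I \<noteq> {} \<and> (\<forall>x\<in>A. \<forall>i\<in>I. x * i \<in> I \<and> i * x \<in> I) \<longrightarrow> I = A"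
    using cs unfolding completely_simple_subsg_def by (elim conjE)
  ultimately have "?I = A" using ideal by blast
  then show ?thesis using that \<open>f \<in> A\<close> by blast
qed

text \<open>Writing \<open>f = p q\<close> through the primitive idempotent \<open>e\<close>, an idempotent \<open>g\<close> below \<open>f\<close> gives the idempotent \<open>q g p\<close>
  below \<open>e\<close>, hence equal to \<open>e\<close>, and then \<open>g = p (q g p) q = f\<close>.\<close>
lemma completely_simple_idem_primitive:
  assumes cs: "completely_simple_subsg A" and "f \<in> A" "g \<in> A"
    and "idem f" "idem g" and fg: "f * g = g" and gf: "g * f = g"
  shows "g = f"
proof -
  have cl: "\<And>x y. x \<in> A \<Longrightarrow> y \<in> A \<Longrightarrow> x * y \<in> A"
    using cs unfolding completely_simple_subsg_def by blast
  from cs obtain e where "e \<in> A" and "idem e"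
    and prim: "\<And>f. f \<in> A \<Longrightarrow> idem f \<Longrightarrow> f * e = f \<Longrightarrow> e * f = f \<Longrightarrow> f = e"
    unfolding completely_simple_subsg_def by (elim conjE bexE) blast
  then have ee: "e * e = e" by (simp add: idem_def)
  obtain x y where "x \<in> A" "y \<in> A" and fxy: "f = x * e * y"
    using completely_simple_factor[OF cs \<open>e \<in> A\<close> \<open>f \<in> A\<close>] .
  have ff: "f * f = f" and gg: "g * g = g" using assms(4,5) by (simp_all add: idem_def)
  define p q where "p = f * x * e" and "q = e * y * f"
  have "p * q = f * (x * (e * e) * y) * f" unfolding p_def q_def by (simp add: mult.assoc)
  then have pq: "p * q = f" using fxy[symmetric] ee ff by simp
  have pe: "p * e = p" unfolding p_def using ee by (simp add: mult.assoc)
  have eq: "e * q = q" unfolding q_def using ee by (simp add: mult.assoc[symmetric])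
  have "q * g * p \<in> A" unfolding p_def q_def using cl \<open>e \<in> A\<close> assms(2,3) \<open>x \<in> A\<close> \<open>y \<in> A\<close> by simp
  moreover have "idem (q * g * p)"
  proof -
    have "q * g * p * (q * g * p) = q * g * (p * q) * g * p" by (simp add: mult.assoc)
    also have "\<dots> = q * g * p" using pq gf gg by (simp add: mult.assoc)
    finally show ?thesis unfolding idem_def .
  qed
  moreover have "q * g * p * e = q * g * p" using pe by (simp add: mult.assoc)
  moreover have "e * (q * g * p) = q * g * p" using eq by (simp add: mult.assoc[symmetric])
  ultimately have qgp: "q * g * p = e" using prim by blast
  have "g = f * g * f" using fg gf by simp
  also have "\<dots> = p * q * g * (p * q)" using pq by simp
  also have "\<dots> = p * (q * g * p) * q" by (simp add: mult.assoc)
  also have "\<dots> = f" using qgp pe pq by simp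
  finally show ?thesis .
qed

section \<open>The derived semigroupoid\<close>

locale derived_semigroupoid =
  fixes \<rho> :: "'a::semigroup_mult \<Rightarrow> 'a \<Rightarrow> bool"
  assumes LI: "locally_inverse TYPE('a)" and IC: "inverse_congruence \<rho>"
    and CS: "\<forall>e. tmul \<rho> (cls \<rho> e) (cls \<rho> e) = cls \<rho> e \<longrightarrow> completely_simple_subsg (cls \<rho> e)"
begin

abbreviation c :: "'a \<Rightarrow> 'a set" where "c \<equiv> cls \<rho>"

abbreviation tprod :: "'a set \<Rightarrow> 'a set \<Rightarrow> 'a set" (infixl "\<cdot>" 70) where
  "A \<cdot> B \<equiv> tmul \<rho> A B"

lemma regular: "regular_sg TYPE('a)"
  using locally_inverse_regular[OF LI] .

lemma equivp: "equivp \<rho>"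
  using IC unfolding inverse_congruence_def congruence_def by blast

lemma cls_refl: "x \<in> c x"
  using equivp_reflp[OF equivp] unfolding cls_def by simp

lemma tmul_cls [simp]: "c x \<cdot> c y = c (x * y)"
proof (rule set_eqI)
  have compat: "\<rho> x x' \<Longrightarrow> \<rho> (z * x) (z * x') \<and> \<rho> (x * z) (x' * z)" for x x' z
    using IC unfolding inverse_congruence_def congruence_def by blast
  have trans: "\<rho> x y \<Longrightarrow> \<rho> y z \<Longrightarrow> \<rho> x z" for x y z
    using equivp by (meson equivp_transp)
  fix z
  show "z \<in> c x \<cdot> c y \<longleftrightarrow> z \<in> c (x * y)"
  proof
    assume "z \<in> c x \<cdot> c y"
    then obtain x' y' where "\<rho> x x'" "\<rho> y y'" "\<rho> (x' * y') z"
      unfolding tmul_def cls_def by blast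
    moreover have "\<rho> (x * y) (x' * y)" "\<rho> (x' * y) (x' * y')"
      using compat \<open>\<rho> x x'\<close> \<open>\<rho> y y'\<close> by blast+
    ultimately show "z \<in> c (x * y)" unfolding cls_def using trans by blast
  next
    assume "z \<in> c (x * y)"
    then have "\<rho> (x * y) z" by (simp add: cls_def)
    then show "z \<in> c x \<cdot> c y" unfolding tmul_def using cls_refl by blast
  qed
qed

lemma quot_cls [simp]: "c x \<in> quot \<rho>"
  unfolding quot_def by simp

lemma quot_E: "A \<in> quot \<rho> \<Longrightarrow> (\<And>x. A = c x \<Longrightarrow> P) \<Longrightarrow> P"
  unfolding quot_def by blast

sublocale T: inverse_semigroup_on "quot \<rho>" "tmul \<rho>"
proof
  fix A B D assume "A \<in> quot \<rho>" "B \<in> quot \<rho>"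
  then show "A \<cdot> B \<in> quot \<rho>" by (elim quot_E) simp
  assume "D \<in> quot \<rho>"
  with \<open>A \<in> quot \<rho>\<close> \<open>B \<in> quot \<rho>\<close> show "A \<cdot> B \<cdot> D = A \<cdot> (B \<cdot> D)"
    by (elim quot_E) (simp add: mult.assoc)
next
  fix A assume "A \<in> quot \<rho>"
  have "\<forall>A\<in>quot \<rho>. \<exists>!B. B \<in> quot \<rho> \<and> tinverse \<rho> B A"
    using IC unfolding inverse_congruence_def by (rule conjunct2)
  then show "\<exists>!B. B \<in> quot \<rho> \<and> A \<cdot> B \<cdot> A = A \<and> B \<cdot> A \<cdot> B = B"
    using \<open>A \<in> quot \<rho>\<close> unfolding tinverse_def by (rule bspec)
qed

lemma tinv_eq: "tinv \<rho> = T.inv"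
  unfolding tinv_def T.inv_def tinverse_def by (rule ext) simp

lemma T_inv_cls: "is_inverse y x \<Longrightarrow> T.inv (c x) = c y"
  unfolding is_inverse_def by (rule T.inv_eq) (auto simp: mult.assoc)

lemma T_idem_cls: "idem e \<Longrightarrow> c e \<cdot> c e = c e"
  by (simp add: idem_def)

text \<open>Both idempotents are primitive in their completely simple class and lie above their
  product.\<close>
lemma idem_same_cls_eq:
  assumes "idem e1" "idem e2" and comm: "e1 * e2 = e2 * e1" and cls: "c e1 = c e2"
  shows "e1 = e2"
proof -
  have cs: "completely_simple_subsg (c e1)"
    using CS T_idem_cls[OF assms(1)] by blast
  have e1: "e1 \<in> c e1" and e2: "e2 \<in> c e1" using cls_refl[of e1] cls_refl[of e2] cls by simp_all
  have "c (e1 * e2) = c e1" using T_idem_cls[OF assms(1)] cls by (simp flip: tmul_cls)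
  then have p: "e1 * e2 \<in> c e1" using cls_refl[of "e1 * e2"] by simp
  have ee: "e1 * e1 = e1" "e2 * e2 = e2" using assms(1,2) by (simp_all add: idem_def)
  have "idem (e1 * e2)" "e1 * (e1 * e2) = e1 * e2" "e1 * e2 * e1 = e1 * e2"
    "e2 * (e1 * e2) = e1 * e2" "e1 * e2 * e2 = e1 * e2"
    unfolding idem_def using ee comm by (metis mult.assoc)+
  then have "e1 * e2 = e1" "e1 * e2 = e2"
    using completely_simple_idem_primitive[OF cs] e1 e2 p assms(1,2) by blast+
  then show ?thesis by simp
qed

lemma below_same_cls_eq:
  assumes le1: "nat_le t1 s" and le2: "nat_le t2 s" and cls: "c t1 = c t2"
  shows "t1 = t2"
proof -
  let ?s = "some_inv s"
  have ss: "s * ?s * s = s" using some_inv[OF regular] by simp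
  have u: "idem (s * ?s)" unfolding idem_def using ss by (metis mult.assoc)
  note F1 = nat_le_idem_factor[OF le1 ss] and F2 = nat_le_idem_factor[OF le2 ss]
  have "t1 * ?s * (t2 * ?s) = t2 * ?s * (t1 * ?s)"
    by (rule local_idem_commute[OF LI u]) (use F1 F2 in simp_all)
  moreover have "c (t1 * ?s) = c (t2 * ?s)" using cls by (simp flip: tmul_cls)
  ultimately have "t1 * ?s = t2 * ?s" using idem_same_cls_eq F1(1) F2(1) by blast
  then show ?thesis using F1(4) F2(4) by metis
qed

lemma is_arrow_iff:
  "is_arrow \<rho> (A, s, B) \<longleftrightarrow> A \<in> quot \<rho> \<and> B \<in> quot \<rho> \<and> A \<cdot> c s = B \<and> B \<cdot> T.inv (c s) = A"
  unfolding is_arrow_def tinv_eq by simp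

lemma stable_iff: "stable \<rho> (A, t, B) \<longleftrightarrow> c t = T.inv A \<cdot> B"
  unfolding stable_def tinv_eq lbl_def dom_a_def cod_a_def by simp

lemma arrow_le_iff: "arrow_le (A, t, B) (A', s, B') \<longleftrightarrow> A = A' \<and> B = B' \<and> nat_le t s"
  unfolding arrow_le_def lbl_def dom_a_def cod_a_def by simp

lemma is_arrow_stableI:
  assumes "is_arrow \<rho> (A, s, B)" and t: "c t = T.inv A \<cdot> B"
  shows "is_arrow \<rho> (A, t, B)"
proof -
  have Q: "A \<in> quot \<rho>" "B \<in> quot \<rho>" and B: "B = A \<cdot> c s" and A: "A = B \<cdot> T.inv (c s)"
    using assms(1) by (auto simp: is_arrow_iff)
  have "A \<cdot> c t = B" using Q by (simp add: t B)
  moreover have "B \<cdot> T.inv (c t) = A" using Q by (simp add: t A T.inv_mult)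
  ultimately show ?thesis using Q by (simp add: is_arrow_iff)
qed

lemma comp_is_arrow:
  assumes "is_arrow \<rho> (A, s, B)" "is_arrow \<rho> (B, t, D)"
  shows "is_arrow \<rho> (A, s * t, D)"
proof -
  have Q: "A \<in> quot \<rho>" "D \<in> quot \<rho>" and "A \<cdot> c s = B" "B \<cdot> T.inv (c s) = A"
    and "B \<cdot> c t = D" "D \<cdot> T.inv (c t) = B"
    using assms by (auto simp: is_arrow_iff)
  moreover have "A \<cdot> c (s * t) = A \<cdot> c s \<cdot> c t" using Q by (simp flip: tmul_cls)
  moreover have "D \<cdot> T.inv (c (s * t)) = D \<cdot> T.inv (c t) \<cdot> T.inv (c s)"
    using Q by (simp add: T.inv_mult flip: tmul_cls)
  ultimately show ?thesis by (simp add: is_arrow_iff)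
qed

lemma arrow_cod_inverse_absorb:
  assumes "is_arrow \<rho> (A, s, B)" and "is_inverse s' s"
  shows "B \<cdot> c (s' * s) = B"
proof -
  have "B \<in> quot \<rho>" "A \<cdot> c s = B" "B \<cdot> T.inv (c s) = A" using assms(1) by (auto simp: is_arrow_iff)
  moreover have "B \<cdot> c (s' * s) = B \<cdot> T.inv (c s) \<cdot> c s"
    using \<open>B \<in> quot \<rho>\<close> T_inv_cls[OF assms(2)] by (simp flip: tmul_cls)
  ultimately show ?thesis by simp
qed

lemma arrow_dom_inverse_absorb:
  assumes "is_arrow \<rho> (B, t, D)" and "is_inverse t' t"
  shows "B \<cdot> c (t * t') = B"
proof -
  have "B \<in> quot \<rho>" "B \<cdot> c t = D" "D \<cdot> T.inv (c t) = B" using assms(1) by (auto simp: is_arrow_iff)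
  moreover have "B \<cdot> c (t * t') = B \<cdot> c t \<cdot> T.inv (c t)"
    using \<open>B \<in> quot \<rho>\<close> T_inv_cls[OF assms(2)] by (simp flip: tmul_cls)
  ultimately show ?thesis by simp
qed

lemma stable_inverse_mult:
  assumes "is_arrow \<rho> (A, t, B)" "stable \<rho> (A, t, B)" and "is_inverse t' t"
  shows "c (t' * t) = T.inv B \<cdot> B" "c (t * t') = T.inv A \<cdot> A"
proof -
  have Q: "A \<in> quot \<rho>" "B \<in> quot \<rho>" and B: "A \<cdot> c t = B" and A: "B \<cdot> T.inv (c t) = A"
    using assms(1) by (simp_all add: is_arrow_iff)
  have t: "c t = T.inv A \<cdot> B" using assms(2) by (simp add: stable_iff)
  have t': "c t' = T.inv (c t)" using T_inv_cls[OF assms(3)] by simp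
  have AB: "A \<cdot> (T.inv A \<cdot> B) = B" using Q by (simp flip: B)
  have BA: "B \<cdot> (T.inv B \<cdot> A) = A" using Q by (simp flip: A)
  have "c (t' * t) = T.inv (c t) \<cdot> c t" by (simp add: t' flip: tmul_cls)
  also have "\<dots> = T.inv B \<cdot> (A \<cdot> (T.inv A \<cdot> B))" using Q by (simp add: t T.inv_mult)
  finally show "c (t' * t) = T.inv B \<cdot> B" by (simp only: AB)
  have "c (t * t') = c t \<cdot> T.inv (c t)" by (simp add: t' flip: tmul_cls)
  also have "\<dots> = T.inv A \<cdot> (B \<cdot> (T.inv B \<cdot> A))" using Q by (simp add: t T.inv_mult)
  finally show "c (t * t') = T.inv A \<cdot> A" by (simp only: BA)
qed

lemma idem_loop_is_arrow:
  assumes "G \<in> quot \<rho>" "idem h" "G \<cdot> c h = G"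
  shows "is_arrow \<rho> (G, h, G)"
  using assms T.inv_idem[of "c h"] by (simp add: is_arrow_iff idem_def)

lemma cls_sg_sandwich:
  assumes "idem e" "idem f" "h \<in> sg_sandwich e f"
  shows "c h = c e \<cdot> c f"
  using T.sandwich_eq_mult[of "c e" "c f" "c h"] assms
  by (simp add: sg_sandwich_def idem_def)

definition stable_below :: "'a arrow \<Rightarrow> 'a arrow \<Rightarrow> bool" where
  "stable_below a b \<longleftrightarrow> is_arrow \<rho> b \<and> stable \<rho> b \<and> arrow_le b a"

lemma stable_below_iff:
  "stable_below (A, s, B) (A', t, B') \<longleftrightarrow>
     A' = A \<and> B' = B \<and> is_arrow \<rho> (A, t, B) \<and> c t = T.inv A \<cdot> B \<and> nat_le t s"
  unfolding stable_below_def arrow_le_iff stable_iff by auto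

lemma stable_below_unique:
  assumes "stable_below a b1" "stable_below a b2"
  shows "b1 = b2"
proof -
  obtain A s B A1 t1 B1 A2 t2 B2 where "a = (A, s, B)" "b1 = (A1, t1, B1)" "b2 = (A2, t2, B2)"
    by (metis prod.exhaust)
  with assms show ?thesis
    using below_same_cls_eq[of t1 s t2] by (simp add: stable_below_iff)
qed

lemma exists_idem_below_cls:
  assumes u: "idem u" and Q: "Q \<in> quot \<rho>" "Q \<cdot> Q = Q"
  obtains e where "idem e" "u * e = e" "c e = Q \<cdot> c u"
proof -
  interpret L: inverse_semigroup_on "local_submonoid u" "(*)"
    using inverse_semigroup_on_local_submonoid[OF LI u] .
  obtain q where q: "Q = c q" using Q(1) by (rule quot_E)
  have uu: "u * u = u" using u by (simp add: idem_def)
  define x where "x = u * q * u"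
  have x: "x \<in> local_submonoid u" unfolding x_def local_submonoid_def by blast
  define e where "e = x * L.inv x"
  have "idem e" unfolding e_def idem_def using x by (simp add: mult.assoc)
  moreover have "u * e = e" unfolding e_def x_def using uu by (simp add: mult.assoc[symmetric])
  moreover have "c e = Q \<cdot> c u"
  proof -
    have uQ: "c u \<cdot> Q = Q \<cdot> c u" using Q T_idem_cls[OF u] by (intro T.idem_commute) simp_all
    have cx: "c x = Q \<cdot> c u"
      using Q T_idem_cls[OF u] uQ by (simp add: x_def q flip: tmul_cls)
    have "is_inverse (L.inv x) x" unfolding is_inverse_def using x by (simp add: mult.assoc)
    then have "c (L.inv x) = T.inv (c x)" by (simp add: T_inv_cls)
    also have "\<dots> = c x"
      using cx T.inv_idem[of "Q \<cdot> c u"] T.idem_mult[of Q "c u"] Q T_idem_cls[OF u] by simp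
    finally have "c (L.inv x) = c x" .
    then show ?thesis unfolding e_def using T.idem_mult[of Q "c u"] Q T_idem_cls[OF u] cx
      by (simp flip: tmul_cls)
  qed
  ultimately show ?thesis using that by blast
qed

lemma stable_below_exists:
  assumes "is_arrow \<rho> (A, s, B)"
  obtains t where "stable_below (A, s, B) (A, t, B)"
proof -
  have Q: "A \<in> quot \<rho>" "B \<in> quot \<rho>" and B: "A \<cdot> c s = B"
    using assms by (simp_all add: is_arrow_iff)
  let ?s = "some_inv s"
  have ss: "s * ?s * s = s" using some_inv[OF regular] by simp
  have u: "idem (s * ?s)" unfolding idem_def using ss by (metis mult.assoc)
  have "T.inv A \<cdot> A \<in> quot \<rho>" "T.inv A \<cdot> A \<cdot> (T.inv A \<cdot> A) = T.inv A \<cdot> A" using Q by simp_all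
  then obtain e where e: "idem e" "s * ?s * e = e" "c e = T.inv A \<cdot> A \<cdot> c (s * ?s)"
    using exists_idem_below_cls[OF u] by blast
  define t where "t = e * s"
  have "c t = T.inv A \<cdot> A \<cdot> c (s * ?s * s)"
    using Q by (simp add: t_def e(3) flip: tmul_cls)
  then have ct: "c t = T.inv A \<cdot> B" using Q by (simp add: ss flip: B)
  have "nat_le t s"
  proof (rule nat_leI[OF regular, of t e s "?s * e * s"])
    show "t = e * s" by (simp add: t_def)
    show "t = s * (?s * e * s)" using e(2) by (simp add: t_def mult.assoc[symmetric])
    show "e * t = t" using e(1) by (simp add: t_def idem_def mult.assoc[symmetric])
  qed
  then have "stable_below (A, s, B) (A, t, B)"
    using is_arrow_stableI[OF assms ct] ct by (simp add: stable_below_iff)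
  then show ?thesis using that by blast
qed

lemma hat_eqI: "stable_below a b \<Longrightarrow> hat \<rho> a = b"
  unfolding hat_def stable_below_def[symmetric] by (rule the_equality) (auto intro: stable_below_unique)

lemma hat_stable_below:
  assumes "is_arrow \<rho> a"
  shows "stable_below a (hat \<rho> a)"
proof -
  obtain A s B where "a = (A, s, B)" by (metis prod.exhaust)
  then obtain b where "stable_below a b" using stable_below_exists assms by blast
  then show ?thesis using hat_eqI by simp
qed

lemma hatE:
  assumes "is_arrow \<rho> (A, s, B)"
  obtains t where "hat \<rho> (A, s, B) = (A, t, B)" "is_arrow \<rho> (A, t, B)" "c t = T.inv A \<cdot> B"
    "nat_le t s"
proof -
  obtain A' t B' where "hat \<rho> (A, s, B) = (A', t, B')" by (metis prod.exhaust)
  with hat_stable_below[OF assms] show ?thesis using that by (simp add: stable_below_iff)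
qed

lemma hat_hat:
  assumes "is_arrow \<rho> (A, s, B)"
  shows "hat \<rho> (hat \<rho> (A, s, B)) = hat \<rho> (A, s, B)"
proof -
  obtain t where "hat \<rho> (A, s, B) = (A, t, B)" "is_arrow \<rho> (A, t, B)" "c t = T.inv A \<cdot> B"
    using assms by (rule hatE)
  then show ?thesis using hat_eqI nat_le_refl[OF regular] by (simp add: stable_below_iff)
qed

lemma hat_comp:
  assumes a: "is_arrow \<rho> (A, s, B)" and b: "is_arrow \<rho> (B, t, D)"
  shows "hat \<rho> (comp_a (A, s, B) (B, t, D)) = comp_a (hat \<rho> (A, s, B)) (hat \<rho> (B, t, D))"
proof -
  obtain s0 where hs: "hat \<rho> (A, s, B) = (A, s0, B)" "is_arrow \<rho> (A, s0, B)"
    "c s0 = T.inv A \<cdot> B" "nat_le s0 s"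
    using a by (rule hatE)
  obtain t0 where ht: "hat \<rho> (B, t, D) = (B, t0, D)" "is_arrow \<rho> (B, t0, D)"
    "c t0 = T.inv B \<cdot> D" "nat_le t0 t"
    using b by (rule hatE)
  have Q: "A \<in> quot \<rho>" "B \<in> quot \<rho>" "D \<in> quot \<rho>" and D: "B \<cdot> c t = D"
    using a b by (simp_all add: is_arrow_iff)
  have "c (s0 * t0) = T.inv A \<cdot> (B \<cdot> (T.inv B \<cdot> D))"
    using Q by (simp add: hs(3) ht(3) flip: tmul_cls)
  also have "\<dots> = T.inv A \<cdot> D" using Q by (simp flip: D)
  finally have "c (s0 * t0) = T.inv A \<cdot> D" .
  moreover have "nat_le (s0 * t0) (s * t)"
    using nat_le_trans[OF regular nat_le_mult_right[OF LI hs(4)] nat_le_mult_left[OF LI ht(4)]] .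
  ultimately have "stable_below (A, s * t, D) (A, s0 * t0, D)"
    using comp_is_arrow[OF hs(2) ht(2)] by (simp add: stable_below_iff)
  then show ?thesis using hs(1) ht(1) hat_eqI by (simp add: comp_a_def dom_a_def cod_a_def lbl_def)
qed

lemma arrow_invE:
  assumes "is_arrow \<rho> (A, s, B)"
  obtains s' where "arrow_inv \<rho> (A, s, B) = (B, s', A)" "is_inverse s' s"
proof -
  let ?s = "some_inv s"
  have inv: "is_inverse ?s s" using some_inv[OF regular] by (simp add: is_inverse_def)
  have Q: "A \<in> quot \<rho>" "B \<in> quot \<rho>" "A \<cdot> c s = B" "B \<cdot> T.inv (c s) = A"
    using assms by (simp_all add: is_arrow_iff)
  then have "is_arrow \<rho> (B, ?s, A)" by (simp add: is_arrow_iff T_inv_cls[OF inv, symmetric])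
  then have "arrow_inverse \<rho> (B, ?s, A) (A, s, B)"
    using inv by (simp add: arrow_inverse_def dom_a_def cod_a_def lbl_def)
  then have "arrow_inverse \<rho> (arrow_inv \<rho> (A, s, B)) (A, s, B)"
    unfolding arrow_inv_def by (rule someI)
  moreover obtain X s' Y where "arrow_inv \<rho> (A, s, B) = (X, s', Y)" by (metis prod.exhaust)
  ultimately show ?thesis using that by (simp add: arrow_inverse_def dom_a_def cod_a_def lbl_def)
qed

lemma sandwich_loops:
  "sandwich \<rho> G (G, e, G) (G, f, G) = (\<lambda>h. (G, h, G)) ` {h \<in> sg_sandwich e f. is_arrow \<rho> (G, h, G)}"
proof (rule set_eqI)
  fix g :: "'a arrow"
  obtain X h Y where "g = (X, h, Y)" by (metis prod.exhaust)
  then show "g \<in> sandwich \<rho> G (G, e, G) (G, f, G) \<longleftrightarrow>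
      g \<in> (\<lambda>h. (G, h, G)) ` {h \<in> sg_sandwich e f. is_arrow \<rho> (G, h, G)}"
    by (auto simp: sandwich_def loop_idem_def sg_sandwich_def comp_a_def dom_a_def cod_a_def
      lbl_def mult.assoc)
qed

lemma wedge_eq:
  assumes a: "is_arrow \<rho> (A, s, G)" and b: "is_arrow \<rho> (G, t, D)"
    and a': "arrow_inv \<rho> (A, s, G) = (G, s', A)" "is_inverse s' s"
    and b': "arrow_inv \<rho> (G, t, D) = (D, t', G)" "is_inverse t' t"
    and h: "h \<in> sg_sandwich (s' * s) (t * t')"
  shows "wedge \<rho> (G, t, D) (A, s, G) = (G, h, G)" "is_arrow \<rho> (G, h, G)"
proof -
  have e: "idem (s' * s)" and f: "idem (t * t')" using inverse_idems a'(2) b'(2) by blast+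
  have G: "G \<in> quot \<rho>" using a by (simp add: is_arrow_iff)
  have "G \<cdot> c h = G \<cdot> c (s' * s) \<cdot> c (t * t')"
    using G by (simp add: cls_sg_sandwich[OF e f h] del: tmul_cls)
  also have "\<dots> = G"
    by (simp only: arrow_cod_inverse_absorb[OF a a'(2)] arrow_dom_inverse_absorb[OF b b'(2)])
  finally have "G \<cdot> c h = G" .
  moreover have "idem h" using h by (simp add: sg_sandwich_def idem_def)
  ultimately show arr: "is_arrow \<rho> (G, h, G)" using idem_loop_is_arrow G by blast
  have "comp_a (arrow_inv \<rho> (A, s, G)) (A, s, G) = (G, s' * s, G)"
    "comp_a (G, t, D) (arrow_inv \<rho> (G, t, D)) = (G, t * t', G)"
    by (simp_all add: a'(1) b'(1) comp_a_def dom_a_def cod_a_def lbl_def)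
  moreover have "{x \<in> sg_sandwich (s' * s) (t * t'). is_arrow \<rho> (G, x, G)} = {h}"
    using sg_sandwich_unique[OF LI e f h] h arr by blast
  then have "sandwich \<rho> G (G, s' * s, G) (G, t * t', G) = {(G, h, G)}"
    by (simp add: sandwich_loops)
  ultimately show "wedge \<rho> (G, t, D) (A, s, G) = (G, h, G)"
    unfolding wedge_def by (simp add: cod_a_def)
qed

lemma wedgeE:
  assumes a: "is_arrow \<rho> (A, s, G)" and b: "is_arrow \<rho> (G, t, D)"
  obtains s' t' h where "wedge \<rho> (G, t, D) (A, s, G) = (G, h, G)" "is_arrow \<rho> (G, h, G)"
    "is_inverse s' s" "is_inverse t' t" "h \<in> sg_sandwich (s' * s) (t * t')"
proof -
  obtain s' where a': "arrow_inv \<rho> (A, s, G) = (G, s', A)" "is_inverse s' s"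
    using a by (rule arrow_invE)
  obtain t' where b': "arrow_inv \<rho> (G, t, D) = (D, t', G)" "is_inverse t' t"
    using b by (rule arrow_invE)
  have "idem (s' * s)" "idem (t * t')" using inverse_idems a'(2) b'(2) by blast+
  then have h: "t * t' * some_inv (s' * s * (t * t')) * (s' * s) \<in> sg_sandwich (s' * s) (t * t')"
    by (rule sg_sandwich_exists[OF regular])
  show ?thesis using wedge_eq[OF a b a' b' h] a'(2) b'(2) h that by blast
qed

lemma hat_wedge:
  assumes a: "is_arrow \<rho> (A, s, G)" and b: "is_arrow \<rho> (G, t, D)"
  shows "hat \<rho> (wedge \<rho> (G, t, D) (A, s, G)) = wedge \<rho> (hat \<rho> (G, t, D)) (hat \<rho> (A, s, G))"
proof -
  obtain s0 where hs: "hat \<rho> (A, s, G) = (A, s0, G)" "is_arrow \<rho> (A, s0, G)"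
    "c s0 = T.inv A \<cdot> G" "nat_le s0 s"
    using a by (rule hatE)
  obtain t0 where ht: "hat \<rho> (G, t, D) = (G, t0, D)" "is_arrow \<rho> (G, t0, D)"
    "c t0 = T.inv G \<cdot> D" "nat_le t0 t"
    using b by (rule hatE)
  obtain s' t' h where wh: "wedge \<rho> (G, t, D) (A, s, G) = (G, h, G)" "is_arrow \<rho> (G, h, G)"
    "is_inverse s' s" "is_inverse t' t" "h \<in> sg_sandwich (s' * s) (t * t')"
    using a b by (rule wedgeE)
  obtain s0' t0' k where wk: "wedge \<rho> (G, t0, D) (A, s0, G) = (G, k, G)" "is_arrow \<rho> (G, k, G)"
    "is_inverse s0' s0" "is_inverse t0' t0" "k \<in> sg_sandwich (s0' * s0) (t0 * t0')"
    using hs(2) ht(2) by (rule wedgeE)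
  have "nat_le k h" using sg_sandwich_mono[OF LI hs(4) ht(4) wh(3,4) wk(3,4) wh(5) wk(5)] .
  have "idem (s0' * s0)" "idem (t0 * t0')" using inverse_idems wk(3,4) by blast+
  then have "c k = c (s0' * s0) \<cdot> c (t0 * t0')" using cls_sg_sandwich wk(5) by blast
  also have "\<dots> = T.inv G \<cdot> G \<cdot> (T.inv G \<cdot> G)"
    using stable_inverse_mult[OF hs(2) _ wk(3)] stable_inverse_mult[OF ht(2) _ wk(4)] hs(3) ht(3)
    by (simp add: stable_iff)
  also have "\<dots> = T.inv G \<cdot> G" using wk(2) by (simp add: is_arrow_iff)
  finally have "stable_below (G, h, G) (G, k, G)"
    using wk(2) \<open>nat_le k h\<close> by (simp add: stable_below_iff)
  then show ?thesis using wh(1) wk(1) hs(1) ht(1) hat_eqI by simp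
qed

end

theorem lemma5p4:
  fixes \<rho> :: "'a::semigroup_mult \<Rightarrow> 'a \<Rightarrow> bool" and a b :: "'a arrow"
  assumes "E_solid TYPE('a)" and "locally_inverse TYPE('a)"
    and "inverse_congruence \<rho>"
    and "\<forall>e. tmul \<rho> (cls \<rho> e) (cls \<rho> e) = cls \<rho> e \<longrightarrow> completely_simple_subsg (cls \<rho> e)"
    and "is_arrow \<rho> a" and "is_arrow \<rho> b" and "cod_a a = dom_a b"
  shows "hat \<rho> (hat \<rho> a) = hat \<rho> a
    \<and> hat \<rho> (comp_a a b) = comp_a (hat \<rho> a) (hat \<rho> b)
    \<and> hat \<rho> (wedge \<rho> b a) = wedge \<rho> (hat \<rho> b) (hat \<rho> a)"
proof -
  interpret derived_semigroupoid \<rho> using assms(2-4) by unfold_locales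
  obtain A s B B' t D where a: "a = (A, s, B)" and b: "b = (B', t, D)" by (metis prod.exhaust)
  with assms(7) have "B' = B" by (simp add: cod_a_def dom_a_def)
  with a b assms(5,6) show ?thesis using hat_hat hat_comp hat_wedge by simp
qed

end
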